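(* Let $0<s<\tfrac{1}{2}$ and set $$\gamma(s)=\gamma_1(s)\,\gamma_2(s),\qquad \gamma_1(s)=\frac{1}{2}\left(\frac{2^{1-2s}-1}{1-2^{-2s}}\right),\qquad \gamma_2(s)=\frac{2-2^{-2s}}{1-2^{-2s}}.$$ Then for every $\varphi\in L^2(\mathbb{R})$ with $\|\varphi\|_{L^2(\mathbb{R})}=1$, $$\mathcal{Q}_s(|\varphi|)\cdot\mathcal{E}_s(\varphi)\geq \gamma(s),$$ where $$\mathcal{Q}_s(|\varphi|)=\iint_{\mathbb{R}^2}|x-y|^{2s-1}|\varphi(x)|\,|\varphi(y)|\,dx\,dy,\qquad \mathcal{E}_s(\varphi)=\iint_{\mathbb{R}^2}\frac{|\varphi(x)-\varphi(y)|^2}{|x-y|^{1+2s}}\,dx\,dy .$$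
   Context: Functions may be complex valued. $\mathcal{E}_s$ is the fractional energy quadratic form of order $s$ and $\mathcal{Q}_s$ is the fractional position quadratic form. For general $\psi$ the position form is $\mathcal{Q}_s(\psi)=\iint_{\mathbb{R}^2}|x-y|^{2s}\psi(x)\overline{\psi}(y)\,\frac{dx\,dy}{|x-y|}$. The theorem applies it to $\psi=|\varphi|$, which gives the displayed formula. *)

theory Defs
  imports "HOL-Analysis.Analysis"
begin

definition gamma1 :: "real \<Rightarrow> real" where
  "gamma1 s = (1/2) * (((2::real) powr (1 - 2 * s) - 1) / (1 - (2::real) powr (- (2 * s))))"

definition gamma2 :: "real \<Rightarrow> real" where
  "gamma2 s = ((2::real) - 2 powr (- (2 * s))) / (1 - (2::real) powr (- (2 * s)))"

definition gamma :: "real \<Rightarrow> real" where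
  "gamma s = gamma1 s * gamma2 s"

definition Qs :: "real \<Rightarrow> (real \<Rightarrow> complex) \<Rightarrow> ennreal" where
  "Qs s phi = (\<integral>\<^sup>+ (p::real \<times> real). ennreal (abs (fst p - snd p) powr (2 * s - 1) * cmod (phi (fst p)) * cmod (phi (snd p)))
                 \<partial>(lborel \<Otimes>\<^sub>M lborel))"

definition Es :: "real \<Rightarrow> (real \<Rightarrow> complex) \<Rightarrow> ennreal" where
  "Es s phi = (\<integral>\<^sup>+ (p::real \<times> real). ennreal ((cmod (phi (fst p) - phi (snd p)))\<^sup>2 / abs (fst p - snd p) powr (1 + 2 * s))
                 \<partial>(lborel \<Otimes>\<^sub>M lborel))"

end

theory Submission
  imports Defs
begin

text \<open>
  Truncate the kernel: for a cutoff \<open>R > 0\<close> let \<open>G\<^sub>R(h) = |h| powr (-1-2s)\<close> for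
  \<open>|h| \<ge> R\<close> and \<open>0\<close> otherwise, so \<open>\<integral> G\<^sub>R = R powr (-2s) / s\<close>. With \<open>a = |\<phi> x|\<close>,
  \<open>b = |\<phi> y|\<close> and \<open>K = |x - y| \<ge> R\<close>, the identity \<open>a\<^sup>2 + b\<^sup>2 = (a - b)\<^sup>2 + 2ab\<close>,
  \<open>|a - b| \<le> |\<phi> x - \<phi> y|\<close> and \<open>K powr (-1-2s) \<le> R powr (-4s) K powr (2s-1)\<close> bound
  \<open>(a\<^sup>2 + b\<^sup>2) G\<^sub>R(x - y)\<close> by the energy integrand plus \<open>2 R powr (-4s)\<close> times the position
  integrand. Integrating over the plane with \<open>\<integral> |\<phi>|\<^sup>2 = 1\<close> gives
  \<open>2t/s \<le> E + 2t\<^sup>2 Q\<close> for every \<open>t = R powr (-2s) > 0\<close>, and \<open>t = 1/(2sQ)\<close> yields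
  \<open>Q E \<ge> 1/(2s\<^sup>2)\<close>, which dominates \<open>\<gamma>(s)\<close> by convexity of \<open>2 powr (-2s)\<close>.
  Both forms are nonzero for normalised \<open>\<phi>\<close>, which excludes the product \<open>0 \<cdot> \<infinity> = 0\<close>.
\<close>

lemma nn_integral_powr_tail:
  fixes a R :: real
  assumes "0 < a" "0 < R"
  shows "(\<integral>\<^sup>+h. ennreal (indicator {R..} h * h powr (- 1 - a)) \<partial>lborel) = ennreal (R powr (- a) / a)"
proof -
  have "((\<lambda>x. x powr (- 1 - a)) has_integral - (R powr ((- 1 - a) + 1)) / ((- 1 - a) + 1)) {R..}"
    by (rule has_integral_powr_to_inf) (use assms in auto)
  also have "- (R powr ((- 1 - a) + 1)) / ((- 1 - a) + 1) = R powr (- a) / a"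
    using assms by (simp add: field_simps)
  finally have "((\<lambda>x. x powr (- 1 - a)) has_integral R powr (- a) / a) {R..}" .
  from nn_integral_has_integral_lebesgue[OF _ this] show ?thesis
    by simp
qed

lemma nn_integral_abs_powr_tail:
  fixes a R :: real
  assumes "0 < a" "0 < R"
  shows "(\<integral>\<^sup>+h. ennreal (if R \<le> \<bar>h\<bar> then \<bar>h\<bar> powr (- 1 - a) else 0) \<partial>lborel)
    = ennreal (2 * R powr (- a) / a)"
proof -
  define g where "g h = ennreal (indicator {R..} h * h powr (- 1 - a))" for h
  have g_meas [measurable]: "g \<in> borel_measurable borel"
    unfolding g_def by measurable
  have split: "ennreal (if R \<le> \<bar>h\<bar> then \<bar>h\<bar> powr (- 1 - a) else 0) = g h + g (0 + (- 1) * h)" for h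
    using assms unfolding g_def by (auto simp: indicator_def)
  have reflect: "(\<integral>\<^sup>+h. g (0 + (- 1) * h) \<partial>lborel) = (\<integral>\<^sup>+h. g h \<partial>lborel)"
    using nn_integral_real_affine[OF g_meas, of "- 1" 0] by simp
  have "(\<integral>\<^sup>+h. ennreal (if R \<le> \<bar>h\<bar> then \<bar>h\<bar> powr (- 1 - a) else 0) \<partial>lborel)
      = (\<integral>\<^sup>+h. g h \<partial>lborel) + (\<integral>\<^sup>+h. g (0 + (- 1) * h) \<partial>lborel)"
    unfolding split by (rule nn_integral_add) auto
  also have "\<dots> = ennreal (R powr (- a) / a) + ennreal (R powr (- a) / a)"
    unfolding reflect unfolding g_def nn_integral_powr_tail[OF assms] ..
  finally show ?thesis
    using assms by (simp add: ennreal_plus[symmetric] del: ennreal_plus)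
qed

lemma nn_integral_lborel_pair_fst_diff:
  fixes f G :: "real \<Rightarrow> ennreal"
  assumes [measurable]: "f \<in> borel_measurable borel" "G \<in> borel_measurable borel"
  shows "(\<integral>\<^sup>+p. f (fst p) * G (fst p - snd p) \<partial>(lborel \<Otimes>\<^sub>M lborel))
    = (\<integral>\<^sup>+x. f x \<partial>lborel) * (\<integral>\<^sup>+h. G h \<partial>lborel)"
proof -
  have inner: "(\<integral>\<^sup>+y. f x * G (x - y) \<partial>lborel) = f x * (\<integral>\<^sup>+h. G h \<partial>lborel)" for x
  proof -
    have "(\<integral>\<^sup>+y. f x * G (x - y) \<partial>lborel) = f x * (\<integral>\<^sup>+y. G (x + (- 1) * y) \<partial>lborel)"
      by (subst nn_integral_cmult[symmetric]) auto
    also have "(\<integral>\<^sup>+y. G (x + (- 1) * y) \<partial>lborel) = (\<integral>\<^sup>+h. G h \<partial>lborel)"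
      using nn_integral_real_affine[of G "- 1" x] by simp
    finally show ?thesis .
  qed
  have "(\<integral>\<^sup>+p. f (fst p) * G (fst p - snd p) \<partial>(lborel \<Otimes>\<^sub>M lborel))
      = (\<integral>\<^sup>+x. \<integral>\<^sup>+y. f x * G (x - y) \<partial>lborel \<partial>lborel)"
    using lborel.nn_integral_fst[of "\<lambda>p. f (fst p) * G (fst p - snd p)" lborel] by simp
  also have "\<dots> = (\<integral>\<^sup>+x. f x * (\<integral>\<^sup>+h. G h \<partial>lborel) \<partial>lborel)"
    by (simp add: inner)
  finally show ?thesis
    by (simp add: nn_integral_multc)
qed

lemma nn_integral_lborel_pair_snd_diff:
  fixes f G :: "real \<Rightarrow> ennreal"
  assumes [measurable]: "f \<in> borel_measurable borel" "G \<in> borel_measurable borel"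
  shows "(\<integral>\<^sup>+p. f (snd p) * G (fst p - snd p) \<partial>(lborel \<Otimes>\<^sub>M lborel))
    = (\<integral>\<^sup>+x. f x \<partial>lborel) * (\<integral>\<^sup>+h. G h \<partial>lborel)"
proof -
  have inner: "(\<integral>\<^sup>+x. f y * G (x - y) \<partial>lborel) = f y * (\<integral>\<^sup>+h. G h \<partial>lborel)" for y
  proof -
    have "(\<integral>\<^sup>+x. f y * G (x - y) \<partial>lborel) = f y * (\<integral>\<^sup>+x. G (- y + 1 * x) \<partial>lborel)"
      by (subst nn_integral_cmult[symmetric]) auto
    also have "(\<integral>\<^sup>+x. G (- y + 1 * x) \<partial>lborel) = (\<integral>\<^sup>+h. G h \<partial>lborel)"
      using nn_integral_real_affine[of G 1 "- y"] by simp
    finally show ?thesis .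
  qed
  have "(\<integral>\<^sup>+p. f (snd p) * G (fst p - snd p) \<partial>(lborel \<Otimes>\<^sub>M lborel))
      = (\<integral>\<^sup>+y. \<integral>\<^sup>+x. f y * G (x - y) \<partial>lborel \<partial>lborel)"
    using lborel_pair.nn_integral_snd[of "\<lambda>p. f (snd p) * G (fst p - snd p)"]
    by simp
  also have "\<dots> = (\<integral>\<^sup>+y. f y * (\<integral>\<^sup>+h. G h \<partial>lborel) \<partial>lborel)"
    by (simp add: inner)
  finally show ?thesis
    by (simp add: nn_integral_multc)
qed

lemma truncated_kernel_le:
  fixes s R K a b d :: real
  assumes "0 < s" "0 < R" "R \<le> K" "0 \<le> a" "0 \<le> b" "\<bar>a - b\<bar> \<le> d"
  shows "(a\<^sup>2 + b\<^sup>2) * K powr (- 1 - 2 * s)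
    \<le> d\<^sup>2 / K powr (1 + 2 * s) + 2 * R powr (- (4 * s)) * (K powr (2 * s - 1) * a * b)"
proof -
  have K_pos: "0 < K" using assms by linarith
  have "(a - b)\<^sup>2 \<le> d\<^sup>2"
    using assms(6) power_mono[of "\<bar>a - b\<bar>" d 2] by simp
  moreover have "K powr (- 1 - 2 * s) = 1 / K powr (1 + 2 * s)"
    by (simp add: powr_minus_divide[symmetric])
  ultimately have diff: "(a - b)\<^sup>2 * K powr (- 1 - 2 * s) \<le> d\<^sup>2 / K powr (1 + 2 * s)"
    by (simp add: divide_right_mono)
  have "a * b * K powr (- 1 - 2 * s) = (K powr (2 * s - 1) * a * b) * K powr (- (4 * s))"
    using K_pos powr_add[of K "2 * s - 1" "- (4 * s)"] by (simp add: algebra_simps)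
  also have "\<dots> \<le> R powr (- (4 * s)) * (K powr (2 * s - 1) * a * b)"
    using assms K_pos by (subst mult.commute, intro mult_left_mono powr_mono2') auto
  finally have cross: "2 * (a * b * K powr (- 1 - 2 * s))
      \<le> 2 * R powr (- (4 * s)) * (K powr (2 * s - 1) * a * b)"
    by simp
  have "(a\<^sup>2 + b\<^sup>2) * K powr (- 1 - 2 * s)
      = (a - b)\<^sup>2 * K powr (- 1 - 2 * s) + 2 * (a * b * K powr (- 1 - 2 * s))"
    by (simp add: power2_eq_square algebra_simps)
  with diff cross show ?thesis by linarith
qed

lemma Es_Qs_cutoff_bound:
  fixes s R :: real and phi :: "real \<Rightarrow> complex"
  assumes s: "0 < s" and R: "0 < R"
    and [measurable]: "phi \<in> borel_measurable borel"
    and norm: "(\<integral>\<^sup>+ x. ennreal ((cmod (phi x))\<^sup>2) \<partial>lborel) = 1"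
  shows "ennreal (2 * R powr (- 2 * s) / s) \<le> Es s phi + ennreal (2 * R powr (- (4 * s))) * Qs s phi"
proof -
  define G where "G h = ennreal (if R \<le> \<bar>h\<bar> then \<bar>h\<bar> powr (- 1 - 2 * s) else 0)" for h :: real
  define f where "f x = ennreal ((cmod (phi x))\<^sup>2)" for x
  define c where "c = 2 * R powr (- (4 * s))"
  have [measurable]: "G \<in> borel_measurable borel" "f \<in> borel_measurable borel"
    unfolding G_def f_def by measurable
  have G_int: "(\<integral>\<^sup>+h. G h \<partial>lborel) = ennreal (R powr (- 2 * s) / s)"
    unfolding G_def using nn_integral_abs_powr_tail[of "2 * s" R] s R by simp
  have pointwise: "f (fst p) * G (fst p - snd p) + f (snd p) * G (fst p - snd p)
      \<le> ennreal ((cmod (phi (fst p) - phi (snd p)))\<^sup>2 / \<bar>fst p - snd p\<bar> powr (1 + 2 * s))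
        + ennreal c * ennreal (\<bar>fst p - snd p\<bar> powr (2 * s - 1) * cmod (phi (fst p)) * cmod (phi (snd p)))"
    for p :: "real \<times> real"
  proof (cases "R \<le> \<bar>fst p - snd p\<bar>")
    case True
    have "\<bar>cmod (phi (fst p)) - cmod (phi (snd p))\<bar> \<le> cmod (phi (fst p) - phi (snd p))"
      by (rule norm_triangle_ineq3)
    from truncated_kernel_le[OF s R True norm_ge_zero norm_ge_zero this]
    show ?thesis
      unfolding f_def G_def c_def using True
      by (simp add: ennreal_mult[symmetric] ennreal_plus[symmetric] distrib_right ennreal_leI
               del: ennreal_plus)
  qed (simp add: G_def)
  have "ennreal (2 * R powr (- 2 * s) / s)
      = (\<integral>\<^sup>+p. f (fst p) * G (fst p - snd p) \<partial>(lborel \<Otimes>\<^sub>M lborel))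
        + (\<integral>\<^sup>+p. f (snd p) * G (fst p - snd p) \<partial>(lborel \<Otimes>\<^sub>M lborel))"
    unfolding nn_integral_lborel_pair_fst_diff[of f G, simplified]
      nn_integral_lborel_pair_snd_diff[of f G, simplified]
    using s norm by (simp add: f_def[symmetric] G_int ennreal_plus[symmetric] del: ennreal_plus)
  also have "\<dots> = (\<integral>\<^sup>+p. f (fst p) * G (fst p - snd p) + f (snd p) * G (fst p - snd p)
      \<partial>(lborel \<Otimes>\<^sub>M lborel))"
    by (rule nn_integral_add[symmetric]) auto
  also have "\<dots> \<le> Es s phi + ennreal c * Qs s phi"
    unfolding Es_def Qs_def
    by (subst nn_integral_cmult[symmetric], measurable, subst nn_integral_add[symmetric], measurable)
       (rule nn_integral_mono, rule pointwise)
  finally show ?thesis unfolding c_def .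
qed

lemma Es_Qs_bound:
  fixes s t :: real and phi :: "real \<Rightarrow> complex"
  assumes s: "0 < s" and t: "0 < t"
    and "phi \<in> borel_measurable borel"
    and "(\<integral>\<^sup>+ x. ennreal ((cmod (phi x))\<^sup>2) \<partial>lborel) = 1"
  shows "ennreal (2 * t / s) \<le> Es s phi + ennreal (2 * t\<^sup>2) * Qs s phi"
proof -
  define R where "R = t powr (- 1 / (2 * s))"
  have R: "0 < R" unfolding R_def using t by simp
  have R_t: "R powr (- 2 * s) = t"
    unfolding R_def using s t by (simp add: powr_powr)
  have "R powr (- (4 * s)) = (R powr (- 2 * s)) powr 2"
    using R by (simp add: powr_powr)
  then have R_t2: "R powr (- (4 * s)) = t\<^sup>2"
    using R_t t by (simp add: powr_numeral)
  from Es_Qs_cutoff_bound[OF s R assms(3,4)] show ?thesis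
    unfolding R_t R_t2 .
qed

lemma product_ge_of_quadratic_bound:
  fixes s q e :: real
  assumes s: "0 < s" and q: "0 < q"
    and bound: "\<And>t. 0 < t \<Longrightarrow> 2 * t / s \<le> e + 2 * t\<^sup>2 * q"
  shows "1 / (2 * s\<^sup>2) \<le> q * e"
proof -
  define t where "t = 1 / (2 * s * q)"
  have "2 * t / s = 2 * (1 / (2 * s\<^sup>2 * q))" and "2 * t\<^sup>2 * q = 1 / (2 * s\<^sup>2 * q)"
    unfolding t_def using s q by (simp_all add: field_simps power2_eq_square)
  moreover have "0 < t"
    unfolding t_def using s q by simp
  ultimately have "1 / (2 * s\<^sup>2 * q) \<le> e"
    using bound[of t] by linarith
  then show ?thesis
    using s q by (simp add: field_simps)
qed

lemma two_powr_neg_le: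
  fixes s :: real
  assumes "0 < s" "s < 1/2"
  shows "(2::real) powr (- (2 * s)) \<le> 1 - s"
proof -
  have "exp ((1 - 2 * s) *\<^sub>R 0 + (2 * s) *\<^sub>R (- ln 2)) \<le> (1 - 2 * s) * exp 0 + (2 * s) * exp (- ln 2)"
    by (rule convex_onD[OF exp_convex]) (use assms in auto)
  moreover have "exp (- ln 2) = (1/2::real)"
    by (simp add: exp_minus)
  ultimately show ?thesis
    by (simp add: powr_def)
qed

lemma gamma_le:
  fixes s :: real
  assumes s: "0 < s" "s < 1/2"
  shows "gamma s \<le> 1 / (2 * s\<^sup>2)"
proof -
  define u where "u = (2::real) powr (- (2 * s))"
  have u: "u \<le> 1 - s"
    using two_powr_neg_le[OF s] by (simp add: u_def)
  have "(2::real) powr (1 - 2 * s) = 2 * u"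
    unfolding u_def using powr_add[of "2::real" 1 "- (2 * s)"] by simp
  then have gamma_u: "gamma s = (2 * u - 1) * (2 - u) / (2 * (1 - u)\<^sup>2)"
    unfolding gamma_def gamma1_def gamma2_def u_def[symmetric]
    by (simp add: power2_eq_square field_simps)
  have "(2 * u - 1) * (2 - u) = 1 - (3 - 2 * u) * (1 - u)"
    by (simp add: algebra_simps)
  also have "\<dots> \<le> 1"
    using u s by simp
  finally have "gamma s \<le> 1 / (2 * (1 - u)\<^sup>2)"
    unfolding gamma_u by (rule divide_right_mono) simp
  also have "\<dots> \<le> 1 / (2 * s\<^sup>2)"
    using u s by (intro divide_left_mono mult_pos_pos power_mono) auto
  finally show ?thesis .
qed

lemma nn_integral_norm_sq_AE_const:
  fixes phi :: "real \<Rightarrow> complex"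
  assumes "AE x in lborel. phi x = c"
  shows "(\<integral>\<^sup>+ x. ennreal ((cmod (phi x))\<^sup>2) \<partial>lborel) = ennreal ((cmod c)\<^sup>2) * \<infinity>"
proof -
  have "(\<integral>\<^sup>+ x. ennreal ((cmod (phi x))\<^sup>2) \<partial>lborel) = (\<integral>\<^sup>+ x. ennreal ((cmod c)\<^sup>2) \<partial>(lborel :: real measure))"
    by (rule nn_integral_cong_AE) (use assms in \<open>auto elim: eventually_mono\<close>)
  then show ?thesis by simp
qed

lemma not_AE_const_if_normalised:
  fixes phi :: "real \<Rightarrow> complex"
  assumes "(\<integral>\<^sup>+ x. ennreal ((cmod (phi x))\<^sup>2) \<partial>lborel) = 1"
  shows "\<not> (AE x in lborel. phi x = c)"
  using assms nn_integral_norm_sq_AE_const[of phi c] by (cases "c = 0") auto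

lemma Es_neq_zero:
  fixes s :: real and phi :: "real \<Rightarrow> complex"
  assumes [measurable]: "phi \<in> borel_measurable borel"
    and norm: "(\<integral>\<^sup>+ x. ennreal ((cmod (phi x))\<^sup>2) \<partial>lborel) = 1"
  shows "Es s phi \<noteq> 0"
proof
  assume "Es s phi = 0"
  then have "AE p in lborel \<Otimes>\<^sub>M lborel.
      ennreal ((cmod (phi (fst p) - phi (snd p)))\<^sup>2 / \<bar>fst p - snd p\<bar> powr (1 + 2 * s)) = 0"
    unfolding Es_def by (subst (asm) nn_integral_0_iff_AE) measurable
  then have "AE p in lborel \<Otimes>\<^sub>M lborel. phi (fst p) = phi (snd p)"
  proof (rule eventually_mono)
    fix p :: "real \<times> real"
    assume "ennreal ((cmod (phi (fst p) - phi (snd p)))\<^sup>2 / \<bar>fst p - snd p\<bar> powr (1 + 2 * s)) = 0"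
    then have "fst p = snd p \<or> (cmod (phi (fst p) - phi (snd p)))\<^sup>2 \<le> 0"
      by (auto simp: divide_le_0_iff)
    then show "phi (fst p) = phi (snd p)" by auto
  qed
  then have "AE x in lborel. AE y in lborel. phi y = phi x"
    using lborel_pair.AE_pair by (force elim: eventually_mono)
  moreover have "ae_filter (lborel :: real measure) \<noteq> bot"
    by (simp add: ae_filter_eq_bot_iff)
  ultimately obtain x where "AE y in lborel. phi y = phi x"
    using eventually_happens' by blast
  with not_AE_const_if_normalised[OF norm] show False by blast
qed

lemma Qs_neq_zero:
  fixes s :: real and phi :: "real \<Rightarrow> complex"
  assumes [measurable]: "phi \<in> borel_measurable borel"
    and norm: "(\<integral>\<^sup>+ x. ennreal ((cmod (phi x))\<^sup>2) \<partial>lborel) = 1"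
  shows "Qs s phi \<noteq> 0"
proof
  assume "Qs s phi = 0"
  then have "AE p in lborel \<Otimes>\<^sub>M lborel.
      ennreal (\<bar>fst p - snd p\<bar> powr (2 * s - 1) * cmod (phi (fst p)) * cmod (phi (snd p))) = 0"
    unfolding Qs_def by (subst (asm) nn_integral_0_iff_AE) measurable
  then have "AE p in lborel \<Otimes>\<^sub>M lborel. fst p = snd p \<or> phi (fst p) = 0 \<or> phi (snd p) = 0"
  proof (rule eventually_mono)
    fix p :: "real \<times> real"
    assume "ennreal (\<bar>fst p - snd p\<bar> powr (2 * s - 1) * cmod (phi (fst p)) * cmod (phi (snd p))) = 0"
    then have "\<bar>fst p - snd p\<bar> powr (2 * s - 1) * (cmod (phi (fst p)) * cmod (phi (snd p))) = 0"
      by (simp add: mult.assoc)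
    then show "fst p = snd p \<or> phi (fst p) = 0 \<or> phi (snd p) = 0"
      by auto
  qed
  then have "AE x in lborel. AE y in lborel. x = y \<or> phi x = 0 \<or> phi y = 0"
    using lborel_pair.AE_pair by (force elim: eventually_mono)
  then have "AE x in lborel. phi x = 0 \<or> (AE y in lborel. phi y = 0)"
  proof (rule eventually_mono)
    fix x :: real
    assume "AE y in lborel. x = y \<or> phi x = 0 \<or> phi y = 0"
    then have "AE y in lborel. phi x = 0 \<or> phi y = 0"
      using AE_lborel_singleton[of x] by eventually_elim auto
    then show "phi x = 0 \<or> (AE y in lborel. phi y = 0)"
      by (cases "phi x = 0") auto
  qed
  then have "(AE x in lborel. phi x = 0) \<or> (AE y in lborel. phi y = 0)"
    by (cases "AE y in lborel. phi y = 0") auto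
  with not_AE_const_if_normalised[OF norm] show False by blast
qed

theorem theorem3p1:
  fixes s :: real and phi :: "real \<Rightarrow> complex"
  assumes "0 < s" and "s < 1/2"
    and "phi \<in> borel_measurable lborel"
    and "(\<integral>\<^sup>+ x. ennreal ((cmod (phi x))\<^sup>2) \<partial>lborel) = 1"
  shows "ennreal (gamma s) \<le> Qs s phi * Es s phi"
proof -
  have phi: "phi \<in> borel_measurable borel"
    using assms(3) by simp
  note Q_pos = Qs_neq_zero[OF phi assms(4), of s] and E_pos = Es_neq_zero[OF phi assms(4), of s]
  show ?thesis
  proof (cases "Qs s phi = \<infinity> \<or> Es s phi = \<infinity>")
    case True
    with Q_pos E_pos show ?thesis
      by (auto simp: ennreal_mult_eq_top_iff)
  next
    case False
    then obtain q e where q: "Qs s phi = ennreal q" "0 \<le> q" and e: "Es s phi = ennreal e" "0 \<le> e"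
      by (metis ennreal_cases infinity_ennreal_def)
    with Q_pos have q_pos: "0 < q"
      by (cases "q = 0") auto
    have "2 * t / s \<le> e + 2 * t\<^sup>2 * q" if "0 < t" for t
      using Es_Qs_bound[OF assms(1) that phi assms(4)] q e assms(1) that
      by (simp add: ennreal_mult[symmetric] ennreal_plus[symmetric] del: ennreal_plus)
    then have "1 / (2 * s\<^sup>2) \<le> q * e"
      by (rule product_ge_of_quadratic_bound[OF assms(1) q_pos])
    with gamma_le[OF assms(1,2)] have "ennreal (gamma s) \<le> ennreal (q * e)"
      by (intro ennreal_leI) linarith
    with q e show ?thesis
      by (simp add: ennreal_mult)
  qed
qed

end
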